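(* For every $n\ge 3$, if $T$ is chosen uniformly at random from $\bigsqcup_{b\ge1,k\ge0,\,2b+k=n}\mathrm{SYT}^{+k}((b,b))$, the expected number of columns of $T$ (i.e. the expected value of $b$) is $\dfrac{n^2+n-6}{4n-6}$.
   Context: $\mathrm{SYT}^{+k}(\lambda)$: for a partition $\lambda$ of $N$ and $k\ge0$, the set of fillings of the cells of $\lambda$ by nonempty sets of positive integers forming a set partition of $[N+k]$, with $\max S(u)<\min S(v)$ whenever $u\ne v$ and $u$ is weakly northwest of $v$. The shape $(b,b)$ is the $2\times b$ rectangle. *)

theory Defs
  imports Complex_Main
begin

definition is_partition :: "nat list \<Rightarrow> bool" where
  "is_partition lam \<longleftrightarrow> sorted_wrt (\<ge>) lam \<and> (\<forall>x\<in>set lam. 0 < x)"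

text \<open>Cells of the Young diagram (English convention): row i, column j, 0-indexed.\<close>
definition cells :: "nat list \<Rightarrow> (nat \<times> nat) set" where
  "cells lam = {(i, j). i < length lam \<and> j < lam ! i}"

definition weakly_nw :: "nat \<times> nat \<Rightarrow> nat \<times> nat \<Rightarrow> bool" where
  "weakly_nw u v \<longleftrightarrow> fst u \<le> fst v \<and> snd u \<le> snd v"

definition SYT_plus :: "nat \<Rightarrow> nat list \<Rightarrow> (nat \<times> nat \<Rightarrow> nat set) set" where
  "SYT_plus k lam = {S.
     (\<forall>c. c \<notin> cells lam \<longrightarrow> S c = {}) \<and>
     (\<forall>c\<in>cells lam. S c \<noteq> {}) \<and>
     (\<forall>c\<in>cells lam. \<forall>d\<in>cells lam. c \<noteq> d \<longrightarrow> S c \<inter> S d = {}) \<and>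
     (\<Union>c\<in>cells lam. S c) = {1 .. sum_list lam + k} \<and>
     (\<forall>u\<in>cells lam. \<forall>v\<in>cells lam. u \<noteq> v \<and> weakly_nw u v \<longrightarrow> Max (S u) < Min (S v))}"

definition two_row_union :: "nat \<Rightarrow> (nat \<times> (nat \<times> nat \<Rightarrow> nat set)) set" where
  "two_row_union n = {(b, T). 1 \<le> b \<and> 2 * b \<le> n \<and> T \<in> SYT_plus (n - 2 * b) [b, b]}"

end

theory Submission
  imports Defs
begin

text \<open>
  The largest entry m of a set-valued filling lies in a corner z, and deleting it either removes
  the cell z (when it was alone there) or leaves a filling of the same shape. For two-row shapes
  (a, c) with c \<le> a, the number of fillings with entries {1..t} is therefore a count of walks of
  length t from the empty shape, a step adding a cell to one of the rows or, with multiplicity the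
  number of corners, staying put. Pairing these forward counts with the backward counts of walks
  that end in a nonempty rectangle (b, b), both the number of all rectangular fillings with entries
  {1..n} and their total number of columns become walk counts from the empty shape. Those are
  ballot-type differences of binomial coefficients, and their quotient is (n^2 + n - 6) / (4n - 6).
\<close>

definition int_binom :: "int \<Rightarrow> int \<Rightarrow> int" where
  "int_binom n k = (if 0 \<le> k \<and> k \<le> n then int (nat n choose nat k) else 0)"

lemma int_binom_of_nat [simp]: "int_binom (int n) (int k) = int (n choose k)"
  by (simp add: int_binom_def)

lemma int_binom_pascal:
  assumes "0 \<le> n"
  shows "int_binom (n + 1) k = int_binom n k + int_binom n (k - 1)"
proof -
  consider "k \<le> 0" | "0 < k \<and> k \<le> n" | "k = n + 1" | "n + 1 < k" by linarith
  then show ?thesis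
  proof cases
    case 1 then show ?thesis using assms by (simp add: int_binom_def)
  next
    case 2
    then obtain j where "nat k = Suc j" by (metis gr0_implies_Suc zero_less_nat_eq)
    with 2 assms show ?thesis by (simp add: int_binom_def nat_add_distrib nat_diff_distrib)
  next
    case 3 then show ?thesis using assms by (simp add: int_binom_def nat_add_distrib)
  next
    case 4 then show ?thesis by (simp add: int_binom_def)
  qed
qed

lemma int_binom_symmetric:
  assumes "0 \<le> n"
  shows "int_binom n k = int_binom n (n - k)"
  using assms binomial_symmetric[of "nat k" "nat n"]
  by (auto simp: int_binom_def nat_diff_distrib)

lemma int_binom_plus2:
  assumes "0 \<le> n"
  shows "int_binom (n + 2) k = int_binom n k + 2 * int_binom n (k - 1) + int_binom n (k - 2)"
proof -
  have "int_binom (n + 2) k = int_binom ((n + 1) + 1) k" by (simp add: add.assoc)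
  then show ?thesis using int_binom_pascal[of "n + 1"] int_binom_pascal[of n] assms by simp
qed

lemma int_binom_plus3:
  assumes "0 \<le> n"
  shows "int_binom (n + 3) k
    = int_binom n k + 3 * int_binom n (k - 1) + 3 * int_binom n (k - 2) + int_binom n (k - 3)"
proof -
  have "int_binom (n + 3) k = int_binom ((n + 1) + 2) k" by (simp add: add.assoc)
  then show ?thesis using int_binom_plus2[of "n + 1"] int_binom_pascal[of n] assms by simp
qed

lemma int_binom_absorption:
  assumes "0 \<le> n"
  shows "(k + 1) * int_binom n (k + 1) = (n - k) * int_binom n k"
proof -
  consider "k < -1" | "k = -1" | "0 \<le> k \<and> k < n" | "k = n" | "n < k" by linarith
  then show ?thesis
  proof cases
    case 3
    then obtain i j where ij: "k = int i" "n = int j" using assms by (metis nonneg_int_cases)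
    have "Suc i * (j choose Suc i) = (j - i) * (j choose i)"
      using binomial_absorption[of i j] binomial_absorb_comp[of j i] by simp
    moreover have "i < j" using 3 ij by simp
    ultimately have "int (Suc i * (j choose Suc i)) = int ((j - i) * (j choose i))" by simp
    with 3 ij \<open>i < j\<close> show ?thesis
      by (simp add: int_binom_def nat_add_distrib of_nat_diff algebra_simps)
  qed (use assms in \<open>auto simp: int_binom_def\<close>)
qed

lemma int_binom_absorption_upper:
  assumes "0 \<le> n"
  shows "(n + 1 - k) * int_binom (n + 1) k = (n + 1) * int_binom n k"
proof -
  consider "k < 0" | "0 \<le> k \<and> k \<le> n + 1" | "n + 1 < k" by linarith
  then show ?thesis
  proof cases
    case 2
    then obtain i j where ij: "k = int i" "n = int j" using assms by (metis nonneg_int_cases)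
    have "(Suc j - i) * (Suc j choose i) = Suc j * (j choose i)"
      using binomial_absorb_comp[of "Suc j" i] by simp
    moreover have "i \<le> Suc j" using 2 ij by simp
    ultimately have "(int (Suc j) - int i) * int (Suc j choose i) = int (Suc j) * int (j choose i)"
      by (metis of_nat_diff of_nat_mult)
    moreover have "n + 1 = int (Suc j)" using ij by simp
    ultimately show ?thesis using ij int_binom_of_nat[of "Suc j" i] by (simp add: algebra_simps)
  qed (use assms in \<open>auto simp: int_binom_def\<close>)
qed

text \<open>
  Closed forms for the backward walk counts defined below as completions and completion_columns:
  from a shape whose rows differ by h and are both nonempty, resp. from the one-row shape (a, 0).
  The column_gain functions count the columns added along the way.
\<close>

definition completions_two :: "int \<Rightarrow> int \<Rightarrow> int" where
  "completions_two h L = int_binom (2*L) (L-h) - int_binom (2*L) (L-h-1)"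

definition completions_one :: "int \<Rightarrow> int \<Rightarrow> int" where
  "completions_one a L = int_binom (2*L-1) (L-a) - int_binom (2*L-1) (L-a-1)"

definition column_gain_two :: "int \<Rightarrow> int \<Rightarrow> int" where
  "column_gain_two h L =
     (h+1) * int_binom (2*L-1) (L-h-2) - int_binom (2*L-1) (L-h-3) + int_binom (2*L-2) (L-h-4)"

definition column_gain_one :: "int \<Rightarrow> int \<Rightarrow> int" where
  "column_gain_one a L =
     (a+1) * int_binom (2*L-2) (L-a-2) - 2 * int_binom (2*L-2) (L-a-3) + 2 * int_binom (2*L-3) (L-a-4)"

lemma completions_two_Suc:
  assumes "1 \<le> h" "0 \<le> L"
  shows "completions_two h (L+1)
    = 2 * completions_two h L + completions_two (h+1) L + completions_two (h-1) L"
  using int_binom_plus2[of "2*L"] assms by (simp add: completions_two_def algebra_simps)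

lemma completions_two_0_Suc:
  assumes "0 \<le> L"
  shows "completions_two 0 (L+1) = completions_two 0 L + completions_two 1 L"
  using int_binom_plus2[of "2*L"] int_binom_symmetric[of "2*L" "L+1"] assms
  by (simp add: completions_two_def algebra_simps)

lemma completions_one_Suc:
  assumes "1 \<le> a" "0 \<le> L"
  shows "completions_one a (L+1) = completions_one (a+1) L + completions_one a L + completions_two (a-1) L"
proof (cases "L = 0")
  case True
  with assms show ?thesis by (cases "a = 1") (auto simp: completions_one_def completions_two_def int_binom_def)
next
  case False
  with assms int_binom_plus2[of "2*L-1"] int_binom_pascal[of "2*L-1"] show ?thesis
    by (simp add: completions_one_def completions_two_def algebra_simps)
qed

lemma column_gain_two_Suc:
  assumes "1 \<le> h" "0 \<le> L"
  shows "column_gain_two h (L+1) = 2 * column_gain_two h L + column_gain_two (h+1) L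
    + completions_two (h+1) L + column_gain_two (h-1) L"
proof (cases "L = 0")
  case True
  with assms show ?thesis by (auto simp: column_gain_two_def completions_two_def int_binom_def)
next
  case False
  with assms int_binom_plus3[of "2*L-2"] int_binom_plus2[of "2*L-2"] int_binom_pascal[of "2*L-2"]
  show ?thesis by (simp add: column_gain_two_def completions_two_def algebra_simps)
qed

lemma column_gain_two_0_Suc:
  assumes "0 \<le> L"
  shows "column_gain_two 0 (L+1) = column_gain_two 0 L + column_gain_two 1 L + completions_two 1 L"
proof (cases "L = 0")
  case True
  then show ?thesis by (simp add: column_gain_two_def completions_two_def int_binom_def)
next
  case False
  with assms int_binom_plus3[of "2*L-2"] int_binom_plus2[of "2*L-2"] int_binom_pascal[of "2*L-2"]
  show ?thesis by (simp add: column_gain_two_def completions_two_def algebra_simps)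
qed

lemma column_gain_one_Suc:
  assumes "1 \<le> a" "0 \<le> L"
  shows "column_gain_one a (L+1) = column_gain_one (a+1) L + completions_one (a+1) L
    + column_gain_one a L + column_gain_two (a-1) L"
proof -
  consider "L = 0" | "L = 1" | "2 \<le> L" using assms by linarith
  then show ?thesis
  proof cases
    case 3
    with assms int_binom_plus3[of "2*L-3"] int_binom_plus2[of "2*L-3"] int_binom_pascal[of "2*L-3"]
    show ?thesis
      by (simp add: column_gain_one_def completions_one_def column_gain_two_def algebra_simps)
  qed (use assms in \<open>auto simp: column_gain_one_def completions_one_def column_gain_two_def int_binom_def\<close>)
qed

lemma completions_one_1:
  assumes "1 \<le> m"
  shows "m * (m+1) * completions_one 1 m = 2 * (2*m-1) * int_binom (2*m-2) (m-1)"
proof -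
  define X where "X = int_binom (2*m-2) (m-1)"
  define b1 where "b1 = int_binom (2*m-1) (m-1)"
  define b2 where "b2 = int_binom (2*m-1) (m-2)"
  have "m * b1 = (2*m-1) * X"
    using int_binom_absorption_upper[of "2*m-2" "m-1"] assms unfolding b1_def X_def by (simp add: algebra_simps)
  moreover have "(m+1) * b2 = (m-1) * b1"
    using int_binom_absorption[of "2*m-1" "m-2"] assms unfolding b1_def b2_def by (simp add: algebra_simps)
  moreover have "completions_one 1 m = b1 - b2"
    unfolding completions_one_def b1_def b2_def by (simp add: algebra_simps)
  ultimately show ?thesis unfolding X_def[symmetric] by algebra
qed

lemma completions_one_1_pos: "1 \<le> m \<Longrightarrow> 0 < completions_one 1 m"
  using completions_one_1[of m] zero_less_mult_pos[of "m * (m+1)" "completions_one 1 m"]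
  by (simp add: int_binom_def)

lemma column_gain_one_1:
  assumes "2 \<le> m"
  shows "m * column_gain_one 1 m = (m-2) * int_binom (2*m-2) (m-1)"
proof -
  define X where "X = int_binom (2*m-2) (m-1)"
  define c0 where "c0 = int_binom (2*m-2) (m-2)"
  define c1 where "c1 = int_binom (2*m-2) (m-3)"
  define c2 where "c2 = int_binom (2*m-2) (m-4)"
  define c3 where "c3 = int_binom (2*m-2) (m-5)"
  define d where "d = int_binom (2*m-3) (m-5)"
  have R0: "m * c0 = (m-1) * X"
    using int_binom_absorption[of "2*m-2" "m-2"] assms unfolding c0_def X_def by (simp add: algebra_simps)
  have R1: "(m+1) * c1 = (m-2) * c0"
    using int_binom_absorption[of "2*m-2" "m-3"] assms unfolding c0_def c1_def by (simp add: algebra_simps)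
  have R2: "(m+2) * c2 = (m-3) * c1"
    using int_binom_absorption[of "2*m-2" "m-4"] assms unfolding c1_def c2_def by (simp add: algebra_simps)
  have R3: "(m+3) * c3 = (m-4) * c2"
    using int_binom_absorption[of "2*m-2" "m-5"] assms unfolding c2_def c3_def by (simp add: algebra_simps)
  have R4: "(m+3) * c3 = (2*m-2) * d"
    using int_binom_absorption_upper[of "2*m-3" "m-5"] assms unfolding c3_def d_def by (simp add: algebra_simps)
  have gain: "column_gain_one 1 m = 2*c1 - 2*c2 + 2*d"
    unfolding column_gain_one_def c1_def c2_def d_def by (simp add: algebra_simps)
  have S1: "m*(m+1)*c1 = (m-2)*(m-1)*X" using R0 R1 by algebra
  have S2: "m*(m+1)*(m+2)*c2 = (m-3)*(m-2)*(m-1)*X" using S1 R2 by algebra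
  have S3: "m*(m+1)*(m+2)*(2*m-2)*d = (m-4)*(m-3)*(m-2)*(m-1)*X" using S2 R3 R4 by algebra
  have "((m+1)*(m+2)*(2*m-2)) * (m * column_gain_one 1 m - (m-2) * X) = 0"
    using gain S1 S2 S3 by algebra
  with assms show ?thesis unfolding X_def by simp
qed

lemma completions_one_1_column_gain:
  assumes "2 \<le> m"
  shows "(completions_one 1 m + column_gain_one 1 m) * (4*m-2) = completions_one 1 m * (m^2 + 3*m - 4)"
proof -
  have "m * (m+1) * completions_one 1 m = 2 * (2*m-1) * int_binom (2*m-2) (m-1)"
    using completions_one_1[of m] assms by simp
  then have "(m*(m+1)) * ((completions_one 1 m + column_gain_one 1 m) * (4*m-2)
      - completions_one 1 m * (m^2 + 3*m - 4)) = 0"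
    using column_gain_one_1[OF assms] by algebra
  with assms show ?thesis by simp
qed

definition set_fillings :: "nat \<Rightarrow> (nat \<times> nat) set \<Rightarrow> (nat \<times> nat \<Rightarrow> nat set) set" where
  "set_fillings m C = {S.
     (\<forall>c. c \<notin> C \<longrightarrow> S c = {}) \<and>
     (\<forall>c\<in>C. S c \<noteq> {}) \<and>
     (\<forall>c\<in>C. \<forall>d\<in>C. c \<noteq> d \<longrightarrow> S c \<inter> S d = {}) \<and>
     (\<Union>c\<in>C. S c) = {1 .. m} \<and>
     (\<forall>u\<in>C. \<forall>v\<in>C. u \<noteq> v \<and> weakly_nw u v \<longrightarrow> Max (S u) < Min (S v))}"

lemma SYT_plus_eq_set_fillings: "SYT_plus k lam = set_fillings (sum_list lam + k) (cells lam)"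
  unfolding SYT_plus_def set_fillings_def by simp

lemma set_fillingsI:
  assumes "\<And>c. c \<notin> C \<Longrightarrow> S c = {}" and "\<And>c. c \<in> C \<Longrightarrow> S c \<noteq> {}"
    and "\<And>c d. c \<in> C \<Longrightarrow> d \<in> C \<Longrightarrow> c \<noteq> d \<Longrightarrow> S c \<inter> S d = {}"
    and "(\<Union>c\<in>C. S c) = {1 .. m}"
    and "\<And>u v. u \<in> C \<Longrightarrow> v \<in> C \<Longrightarrow> u \<noteq> v \<Longrightarrow> weakly_nw u v \<Longrightarrow> Max (S u) < Min (S v)"
  shows "S \<in> set_fillings m C"
  using assms unfolding set_fillings_def by blast

lemma set_fillingsD:
  assumes "S \<in> set_fillings m C"
  shows set_fillings_outside: "c \<notin> C \<Longrightarrow> S c = {}"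
    and set_fillings_nonempty: "c \<in> C \<Longrightarrow> S c \<noteq> {}"
    and set_fillings_Union: "(\<Union>c\<in>C. S c) = {1 .. m}"
    and set_fillings_mono: "u \<in> C \<Longrightarrow> v \<in> C \<Longrightarrow> u \<noteq> v \<Longrightarrow> weakly_nw u v \<Longrightarrow> Max (S u) < Min (S v)"
proof -
  note F = assms[unfolded set_fillings_def mem_Collect_eq]
  show "c \<notin> C \<Longrightarrow> S c = {}" using F[THEN conjunct1] by blast
  show "c \<in> C \<Longrightarrow> S c \<noteq> {}" using F[THEN conjunct2, THEN conjunct1] by blast
  show "(\<Union>c\<in>C. S c) = {1 .. m}" using F[THEN conjunct2, THEN conjunct2, THEN conjunct2, THEN conjunct1] .
  show "u \<in> C \<Longrightarrow> v \<in> C \<Longrightarrow> u \<noteq> v \<Longrightarrow> weakly_nw u v \<Longrightarrow> Max (S u) < Min (S v)"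
    using F[THEN conjunct2, THEN conjunct2, THEN conjunct2, THEN conjunct2] by blast
qed

lemma set_fillings_disjoint:
  assumes "S \<in> set_fillings m C" "c \<noteq> d"
  shows "S c \<inter> S d = {}"
proof (cases "c \<in> C \<and> d \<in> C")
  case True
  then show ?thesis
    using assms(2)
      assms(1)[unfolded set_fillings_def mem_Collect_eq, THEN conjunct2, THEN conjunct2, THEN conjunct1]
    by blast
qed (use set_fillings_outside[OF assms(1)] in blast)

lemma set_fillings_subset:
  assumes "S \<in> set_fillings m C"
  shows "S c \<subseteq> {1..m}"
  using set_fillings_Union[OF assms] set_fillings_outside[OF assms, of c] by blast

lemma set_fillings_finite:
  assumes "S \<in> set_fillings m C"
  shows "finite (S c)"
  using set_fillings_subset[OF assms] finite_subset by blast

lemma finite_set_fillings: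
  assumes "finite C"
  shows "finite (set_fillings m C)"
proof (rule finite_subset)
  show "set_fillings m C \<subseteq> {S. \<forall>c. (c \<in> C \<longrightarrow> S c \<in> Pow {1..m}) \<and> (c \<notin> C \<longrightarrow> S c = {})}"
    using set_fillings_subset set_fillings_outside by blast
  show "finite {S. \<forall>c. (c \<in> C \<longrightarrow> S c \<in> Pow {1..m}) \<and> (c \<notin> C \<longrightarrow> S c = ({}::nat set))}"
    using assms by (intro finite_set_of_finite_funs) auto
qed

lemma set_fillings_Min_in:
  assumes "S \<in> set_fillings m C" "c \<in> C"
  shows "Min (S c) \<in> S c"
  using set_fillings_nonempty[OF assms] set_fillings_finite[OF assms(1)] by simp

lemma card_le_set_fillings:
  assumes S: "S \<in> set_fillings m C" and "finite C"
  shows "card C \<le> m"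
proof -
  have inj: "inj_on (\<lambda>c. Min (S c)) C"
  proof (rule inj_onI)
    fix c d assume cd: "c \<in> C" "d \<in> C" "Min (S c) = Min (S d)"
    then have "Min (S c) \<in> S c \<inter> S d"
      using set_fillings_Min_in[OF S cd(1)] set_fillings_Min_in[OF S cd(2)] by simp
    then show "c = d" using set_fillings_disjoint[OF S, of c d] by blast
  qed
  have "(\<lambda>c. Min (S c)) ` C \<subseteq> {1..m}"
  proof (rule image_subsetI)
    fix c assume "c \<in> C"
    then show "Min (S c) \<in> {1..m}"
      using set_fillings_Min_in[OF S] set_fillings_subset[OF S, of c] by (meson subsetD)
  qed
  from card_inj_on_le[OF inj this] show ?thesis by simp
qed

definition corner :: "(nat \<times> nat) set \<Rightarrow> nat \<times> nat \<Rightarrow> bool" where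
  "corner C z \<longleftrightarrow> z \<in> C \<and> (\<forall>v\<in>C. v \<noteq> z \<longrightarrow> \<not> weakly_nw z v)"

lemma set_fillings_largest_at_corner:
  assumes S: "S \<in> set_fillings m C" and "m \<in> S z"
  shows "corner C z"
proof -
  have z: "z \<in> C" using set_fillings_outside[OF S] assms(2) by blast
  have "\<not> weakly_nw z v" if "v \<in> C" "v \<noteq> z" for v
  proof
    assume "weakly_nw z v"
    then have "Max (S z) < Min (S v)" using set_fillings_mono[OF S z] that by simp
    moreover have "m \<le> Max (S z)" using assms(2) set_fillings_finite[OF S] by simp
    moreover have "Min (S v) \<le> m" using set_fillings_Min_in[OF S \<open>v \<in> C\<close>] set_fillings_subset[OF S, of v] by auto
    ultimately show False by simp
  qed
  with z show ?thesis unfolding corner_def by blast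
qed

lemma set_fillings_remove_largest:
  assumes S: "S \<in> set_fillings m C" and mz: "m \<in> S z"
  shows "S(z := S z - {m}) \<in> set_fillings (m - 1) (if S z = {m} then C - {z} else C)"
    (is "?T \<in> set_fillings _ ?D")
proof (rule set_fillingsI)
  have z: "corner C z" using set_fillings_largest_at_corner[OF S mz] .
  have m_only_z: "?T c = S c - {m}" for c
    using set_fillings_disjoint[OF S, of c z] mz by (cases "c = z") auto
  show "?T c = {}" if "c \<notin> ?D" for c
    using that set_fillings_outside[OF S, of c] by (auto split: if_splits)
  show "?T c \<noteq> {}" if "c \<in> ?D" for c
    using that set_fillings_nonempty[OF S, of c] mz by (auto split: if_splits)
  show "?T c \<inter> ?T d = {}" if "c \<noteq> d" for c d
    using set_fillings_disjoint[OF S that] by auto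
  have "(\<Union>c\<in>?D. ?T c) = (\<Union>c\<in>C. S c - {m})"
    unfolding m_only_z by (auto split: if_splits)
  also have "\<dots> = {1 .. m - 1}"
    using set_fillings_Union[OF S] by auto
  finally show "(\<Union>c\<in>?D. ?T c) = {1 .. m - 1}" .
  show "Max (?T u) < Min (?T v)" if "u \<in> ?D" "v \<in> ?D" "u \<noteq> v" "weakly_nw u v" for u v
  proof -
    have uv: "u \<in> C" "v \<in> C" "u \<noteq> z" using that z unfolding corner_def by (auto split: if_splits)
    have "Max (?T u) = Max (S u)" using uv by simp
    also have "\<dots> < Min (S v)" using set_fillings_mono[OF S uv(1,2)] that by simp
    also have "\<dots> \<le> Min (?T v)"
      using that set_fillings_nonempty[OF S uv(2)] set_fillings_finite[OF S, of v] mz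
      by (intro Min_antimono) (auto split: if_splits)
    finally show ?thesis .
  qed
qed

lemma set_fillings_insert_largest:
  assumes T: "T \<in> set_fillings (m - 1) D" and z: "corner C z"
    and D: "C - {z} \<subseteq> D" "D \<subseteq> C" and "1 \<le> m"
  shows "T(z := insert m (T z)) \<in> set_fillings m C" (is "?S \<in> _")
proof (rule set_fillingsI)
  have zC: "z \<in> C" using z unfolding corner_def by blast
  have m_notin: "m \<notin> T c" for c using set_fillings_subset[OF T, of c] \<open>1 \<le> m\<close> by auto
  show "?S c = {}" if "c \<notin> C" for c
    using that zC D set_fillings_outside[OF T, of c] by auto
  show "?S c \<noteq> {}" if "c \<in> C" for c
    using that D set_fillings_nonempty[OF T, of c] by (cases "c = z") auto
  show "?S c \<inter> ?S d = {}" if "c \<noteq> d" for c d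
    using that m_notin set_fillings_disjoint[OF T that] by auto
  have "(\<Union>c\<in>C. ?S c) = insert m (\<Union>c\<in>C. T c)"
    using zC by auto
  also have "(\<Union>c\<in>C. T c) = (\<Union>c\<in>D. T c)"
    using D set_fillings_outside[OF T] by blast
  finally show "(\<Union>c\<in>C. ?S c) = {1 .. m}"
    using set_fillings_Union[OF T] \<open>1 \<le> m\<close> by auto
  show "Max (?S u) < Min (?S v)" if "u \<in> C" "v \<in> C" "u \<noteq> v" "weakly_nw u v" for u v
  proof -
    have "u \<noteq> z" "u \<in> D" using that z D unfolding corner_def by auto
    then have "?S u = T u" "Max (T u) \<le> m - 1"
      using set_fillings_Min_in[OF T] set_fillings_subset[OF T, of u] set_fillings_nonempty[OF T]
        set_fillings_finite[OF T, of u] by (auto intro: Max_in)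
    show ?thesis
    proof (cases "v = z \<and> T z = {}")
      case True
      with \<open>Max (T u) \<le> m - 1\<close> \<open>?S u = T u\<close> \<open>1 \<le> m\<close> show ?thesis by simp
    next
      case False
      then have "v \<in> D" using that D set_fillings_outside[OF T, of z] by auto
      then have "Max (T u) < Min (T v)" using set_fillings_mono[OF T \<open>u \<in> D\<close>] that by simp
      moreover have "Min (T v) \<le> m - 1"
        using set_fillings_Min_in[OF T \<open>v \<in> D\<close>] set_fillings_subset[OF T, of v] by auto
      moreover have "Min (?S v) = Min (T v)"
      proof (cases "v = z")
        case True
        with False have "T z \<noteq> {}" by simp
        with True \<open>Min (T v) \<le> m - 1\<close> \<open>1 \<le> m\<close> show ?thesis
          using Min_insert[OF set_fillings_finite[OF T, of z]] by simp
      qed simp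
      ultimately show ?thesis using \<open>?S u = T u\<close> by simp
    qed
  qed
qed

lemma bij_betw_remove_largest:
  assumes z: "corner C z" and "1 \<le> m"
  shows "bij_betw (\<lambda>S. S(z := S z - {m})) {S \<in> set_fillings m C. m \<in> S z}
    (set_fillings (m - 1) (C - {z}) \<union> set_fillings (m - 1) C)"
proof (rule bij_betw_byWitness[where f' = "\<lambda>T. T(z := insert m (T z))"])
  show "\<forall>S\<in>{S \<in> set_fillings m C. m \<in> S z}. (S(z := S z - {m}))(z := insert m ((S(z := S z - {m})) z)) = S"
    by (auto simp: insert_absorb)
  have "m \<notin> T z" if "T \<in> set_fillings (m - 1) D" for T D
    using set_fillings_subset[OF that, of z] \<open>1 \<le> m\<close> by auto
  then show "\<forall>T\<in>set_fillings (m - 1) (C - {z}) \<union> set_fillings (m - 1) C.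
      (T(z := insert m (T z)))(z := (T(z := insert m (T z))) z - {m}) = T"
    by auto
  show "(\<lambda>S. S(z := S z - {m})) ` {S \<in> set_fillings m C. m \<in> S z}
      \<subseteq> set_fillings (m - 1) (C - {z}) \<union> set_fillings (m - 1) C"
    using set_fillings_remove_largest by (fastforce split: if_splits)
  show "(\<lambda>T. T(z := insert m (T z))) ` (set_fillings (m - 1) (C - {z}) \<union> set_fillings (m - 1) C)
      \<subseteq> {S \<in> set_fillings m C. m \<in> S z}"
    using set_fillings_insert_largest[OF _ z _ _ \<open>1 \<le> m\<close>] z unfolding corner_def by auto
qed

lemma card_set_fillings_rec:
  assumes "finite C" and "1 \<le> m"
  shows "card (set_fillings m C)
    = (\<Sum>z | corner C z. card (set_fillings (m - 1) (C - {z})) + card (set_fillings (m - 1) C))"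
proof -
  let ?F = "\<lambda>z. {S \<in> set_fillings m C. m \<in> S z}"
  have corners: "finite {z. corner C z}"
    using assms(1) by (rule finite_subset[rotated]) (auto simp: corner_def)
  have split: "set_fillings m C = (\<Union>z\<in>{z. corner C z}. ?F z)"
  proof (intro equalityI subsetI)
    fix S assume S: "S \<in> set_fillings m C"
    have "m \<in> (\<Union>c\<in>C. S c)" using set_fillings_Union[OF S] \<open>1 \<le> m\<close> by simp
    then obtain z where "m \<in> S z" by blast
    moreover have "corner C z" using set_fillings_largest_at_corner[OF S \<open>m \<in> S z\<close>] .
    ultimately show "S \<in> (\<Union>z\<in>{z. corner C z}. ?F z)" using S by blast
  qed auto
  have disj: "?F y \<inter> ?F z = {}" if "y \<noteq> z" for y z
  proof -
    have "m \<notin> S y \<inter> S z" if "S \<in> set_fillings m C" for S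
      using set_fillings_disjoint[OF that \<open>y \<noteq> z\<close>] by simp
    then show ?thesis by blast
  qed
  have card_F: "card (?F z) = card (set_fillings (m - 1) (C - {z})) + card (set_fillings (m - 1) C)"
    if "corner C z" for z
  proof -
    have "z \<in> C" using that unfolding corner_def by simp
    then have "T z = {}" "T' z \<noteq> {}"
      if "T \<in> set_fillings (m - 1) (C - {z})" "T' \<in> set_fillings (m - 1) C" for T T'
      using set_fillings_outside[OF that(1)] set_fillings_nonempty[OF that(2)] by auto
    then have "set_fillings (m - 1) (C - {z}) \<inter> set_fillings (m - 1) C = {}" by blast
    then show ?thesis
      using bij_betw_same_card[OF bij_betw_remove_largest[OF that \<open>1 \<le> m\<close>]]
        finite_set_fillings \<open>finite C\<close> by (simp add: card_Un_disjoint)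
  qed
  have fin: "finite (?F z)" for z using finite_set_fillings[OF \<open>finite C\<close>] by simp
  have "card (set_fillings m C) = card (\<Union>z\<in>{z. corner C z}. ?F z)"
    by (rule arg_cong[OF split])
  also have "\<dots> = (\<Sum>z | corner C z. card (?F z))"
    using fin disj by (intro card_UN_disjoint[OF corners]) blast+
  also have "\<dots> = (\<Sum>z | corner C z. card (set_fillings (m - 1) (C - {z})) + card (set_fillings (m - 1) C))"
    using card_F by (intro sum.cong) simp_all
  finally show ?thesis .
qed

lemma cells_two_rows: "cells [a, c] = (\<lambda>j. (0, j)) ` {..<a} \<union> (\<lambda>j. (1, j)) ` {..<c}"
  unfolding cells_def by (auto simp: less_Suc_eq nth_Cons')

lemma mem_cells_two_rows: "(i, j) \<in> cells [a, c] \<longleftrightarrow> (i = 0 \<and> j < a) \<or> (i = 1 \<and> j < c)"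
  unfolding cells_two_rows by auto

lemma card_cells_two_rows: "card (cells [a, c]) = a + c"
  unfolding cells_two_rows by (subst card_Un_disjoint) (auto simp: card_image inj_on_def)

lemma corner_two_rows:
  assumes "c \<le> a"
  shows "corner (cells [a, c]) (i, j)
    \<longleftrightarrow> (i = 0 \<and> j = a - 1 \<and> c < a) \<or> (i = 1 \<and> j = c - 1 \<and> 1 \<le> c)"
proof
  assume corner: "corner (cells [a, c]) (i, j)"
  then have ij: "(i = 0 \<and> j < a) \<or> (i = 1 \<and> j < c)"
    unfolding corner_def mem_cells_two_rows by blast
  have outside: "(i', j') \<notin> cells [a, c]" if "(i', j') \<noteq> (i, j)" "i \<le> i'" "j \<le> j'" for i' j'
    using corner that unfolding corner_def weakly_nw_def by auto
  show "(i = 0 \<and> j = a - 1 \<and> c < a) \<or> (i = 1 \<and> j = c - 1 \<and> 1 \<le> c)"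
    using ij outside[of i "Suc j"] outside[of 1 j] assms
    unfolding mem_cells_two_rows by auto
next
  assume "(i = 0 \<and> j = a - 1 \<and> c < a) \<or> (i = 1 \<and> j = c - 1 \<and> 1 \<le> c)"
  with assms show "corner (cells [a, c]) (i, j)"
    unfolding corner_def weakly_nw_def by (auto simp: mem_cells_two_rows)
qed

definition two_row_fillings :: "nat \<Rightarrow> nat \<Rightarrow> nat \<Rightarrow> nat" where
  "two_row_fillings a c t = card (set_fillings t (cells [a, c]))"

definition num_corners :: "nat \<Rightarrow> nat \<Rightarrow> nat" where
  "num_corners a c = (if c < a then 1 else 0) + (if 1 \<le> c then 1 else 0)"

lemma two_row_fillings_Suc:
  assumes "c \<le> a"
  shows "two_row_fillings a c (Suc t) = num_corners a c * two_row_fillings a c t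
    + (if c < a then two_row_fillings (a - 1) c t else 0)
    + (if 1 \<le> c then two_row_fillings a (c - 1) t else 0)"
proof -
  have corners: "{z. corner (cells [a, c]) z}
      = (if c < a then {(0, a - 1)} else {}) \<union> (if 1 \<le> c then {(1, c - 1)} else {})"
    using corner_two_rows[OF assms] by auto
  have "cells [a, c] - {(0, a - 1)} = cells [a - 1, c]" if "c < a"
    using that by (auto simp: cells_two_rows)
  moreover have "cells [a, c] - {(1, c - 1)} = cells [a, c - 1]" if "1 \<le> c"
    using that by (auto simp: cells_two_rows)
  ultimately show ?thesis
    unfolding two_row_fillings_def num_corners_def
    using card_set_fillings_rec[of "cells [a, c]" "Suc t"] corners
    by (auto simp: cells_two_rows algebra_simps)
qed

lemma two_row_fillings_eq_0: "t < a + c \<Longrightarrow> two_row_fillings a c t = 0"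
  using card_le_set_fillings[of _ t "cells [a, c]"] card_cells_two_rows[of a c]
  unfolding two_row_fillings_def cells_two_rows by fastforce

lemma two_row_fillings_0_0_0: "two_row_fillings 0 0 0 = 1"
proof -
  have "set_fillings 0 {} = {\<lambda>_. {}}"
    using set_fillings_outside by (fastforce intro: set_fillingsI)
  then show ?thesis unfolding two_row_fillings_def cells_two_rows by simp
qed

definition two_row_shapes :: "nat \<Rightarrow> (nat \<times> nat) set" where
  "two_row_shapes t = {(a, c). c \<le> a \<and> a + c \<le> t}"

lemma finite_two_row_shapes: "finite (two_row_shapes t)"
  by (rule finite_subset[of _ "{..t} \<times> {..t}"]) (auto simp: two_row_shapes_def)

lemma sum_two_row_shapes_grow_first:
  "(\<Sum>(a, c)\<in>two_row_shapes (Suc t). if c < a then f (a - 1) c else 0) = (\<Sum>(a, c)\<in>two_row_shapes t. f a c)"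
proof -
  have "(\<Sum>(a, c)\<in>two_row_shapes (Suc t). if c < a then f (a - 1) c else 0)
      = (\<Sum>(a, c)\<in>{p\<in>two_row_shapes (Suc t). snd p < fst p}. f (a - 1) c)"
    unfolding sum.inter_filter[OF finite_two_row_shapes] by (rule sum.cong) auto
  also have "\<dots> = (\<Sum>(a, c)\<in>two_row_shapes t. f a c)"
    by (rule sum.reindex_bij_witness[where j = "\<lambda>(a, c). (a - 1, c)" and i = "\<lambda>(a, c). (Suc a, c)"])
       (auto simp: two_row_shapes_def)
  finally show ?thesis .
qed

lemma sum_two_row_shapes_grow_second:
  "(\<Sum>(a, c)\<in>two_row_shapes (Suc t). if 1 \<le> c then f a (c - 1) else 0)
    = (\<Sum>(a, c)\<in>two_row_shapes t. if c < a then f a c else 0)"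
proof -
  have "(\<Sum>(a, c)\<in>two_row_shapes (Suc t). if 1 \<le> c then f a (c - 1) else 0)
      = (\<Sum>(a, c)\<in>{p\<in>two_row_shapes (Suc t). 1 \<le> snd p}. f a (c - 1))"
    unfolding sum.inter_filter[OF finite_two_row_shapes] by (rule sum.cong) auto
  also have "\<dots> = (\<Sum>(a, c)\<in>{p\<in>two_row_shapes t. snd p < fst p}. f a c)"
    by (rule sum.reindex_bij_witness[where j = "\<lambda>(a, c). (a, c - 1)" and i = "\<lambda>(a, c). (a, Suc c)"])
       (auto simp: two_row_shapes_def)
  also have "\<dots> = (\<Sum>(a, c)\<in>two_row_shapes t. if c < a then f a c else 0)"
    unfolding sum.inter_filter[OF finite_two_row_shapes] by (rule sum.cong) auto
  finally show ?thesis .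
qed

lemma sum_two_row_shapes_Suc:
  assumes "\<And>a c. t < a + c \<Longrightarrow> f a c = 0"
  shows "(\<Sum>(a, c)\<in>two_row_shapes (Suc t). f a c) = (\<Sum>(a, c)\<in>two_row_shapes t. f a c)"
  using assms by (intro sum.mono_neutral_right[OF finite_two_row_shapes])
    (auto simp: two_row_shapes_def, metis not_le)

text \<open>
  A Chapman--Kolmogorov identity: two_row_fillings counts walks from the empty shape (by
  two_row_fillings_Suc), and K is any solution of the backward recursion of the same walk.
\<close>

lemma two_row_fillings_duality:
  fixes K :: "nat \<times> nat \<Rightarrow> nat \<Rightarrow> int"
  assumes K_Suc: "\<And>a c L. c \<le> a \<Longrightarrow> K (a, c) (Suc L)
    = K (Suc a, c) L + (if c < a then K (a, Suc c) L else 0) + int (num_corners a c) * K (a, c) L"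
  shows "(\<Sum>(a, c)\<in>two_row_shapes t. int (two_row_fillings a c t) * K (a, c) L) = K (0, 0) (t + L)"
proof (induction t arbitrary: L)
  case 0
  have "two_row_shapes 0 = {(0, 0)}" by (auto simp: two_row_shapes_def)
  then show ?case by (simp add: two_row_fillings_0_0_0)
next
  case (Suc t)
  let ?G = "\<lambda>a c. int (two_row_fillings a c t)"
  have "(\<Sum>(a, c)\<in>two_row_shapes (Suc t). int (two_row_fillings a c (Suc t)) * K (a, c) L)
    = (\<Sum>(a, c)\<in>two_row_shapes (Suc t). int (num_corners a c) * ?G a c * K (a, c) L
        + (if c < a then ?G (a - 1) c * K (Suc (a - 1), c) L else 0)
        + (if 1 \<le> c then ?G a (c - 1) * K (a, Suc (c - 1)) L else 0))"
    by (rule sum.cong) (auto simp: two_row_fillings_Suc two_row_shapes_def algebra_simps)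
  also have "\<dots> = (\<Sum>(a, c)\<in>two_row_shapes (Suc t). int (num_corners a c) * ?G a c * K (a, c) L)
    + (\<Sum>(a, c)\<in>two_row_shapes (Suc t). if c < a then ?G (a - 1) c * K (Suc (a - 1), c) L else 0)
    + (\<Sum>(a, c)\<in>two_row_shapes (Suc t). if 1 \<le> c then ?G a (c - 1) * K (a, Suc (c - 1)) L else 0)"
    by (simp add: sum.distrib split_def)
  also have "\<dots> = (\<Sum>(a, c)\<in>two_row_shapes t. int (num_corners a c) * ?G a c * K (a, c) L)
    + (\<Sum>(a, c)\<in>two_row_shapes t. ?G a c * K (Suc a, c) L)
    + (\<Sum>(a, c)\<in>two_row_shapes t. if c < a then ?G a c * K (a, Suc c) L else 0)"
    using sum_two_row_shapes_grow_first[of "\<lambda>a c. ?G a c * K (Suc a, c) L" t]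
      sum_two_row_shapes_grow_second[of "\<lambda>a c. ?G a c * K (a, Suc c) L" t]
      sum_two_row_shapes_Suc[of t "\<lambda>a c. int (num_corners a c) * ?G a c * K (a, c) L"]
    by (simp add: two_row_fillings_eq_0)
  also have "\<dots> = (\<Sum>(a, c)\<in>two_row_shapes t. ?G a c * K (a, c) (Suc L))"
    unfolding sum.distrib[symmetric]
    by (rule sum.cong) (auto simp: K_Suc two_row_shapes_def algebra_simps)
  also have "\<dots> = K (0, 0) (Suc t + L)" using Suc.IH[of "Suc L"] by simp
  finally show ?case .
qed

text \<open>From the empty shape the first step is forced to (1, 0), whence the case L \<ge> 1 below.\<close>

definition completions :: "nat \<times> nat \<Rightarrow> nat \<Rightarrow> int" where
  "completions s L = (case s of (a, c) \<Rightarrow>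
     if 1 \<le> c then completions_two (int a - int c) (int L)
     else if 1 \<le> a then completions_one (int a) (int L)
     else if 1 \<le> L then completions_one 1 (int L - 1) else 0)"

definition completion_columns :: "nat \<times> nat \<Rightarrow> nat \<Rightarrow> int" where
  "completion_columns s L = (case s of (a, c) \<Rightarrow>
     if 1 \<le> c then int a * completions_two (int a - int c) (int L) + column_gain_two (int a - int c) (int L)
     else if 1 \<le> a then int a * completions_one (int a) (int L) + column_gain_one (int a) (int L)
     else if 1 \<le> L then completions_one 1 (int L - 1) + column_gain_one 1 (int L - 1) else 0)"

lemma completions_Suc:
  assumes "c \<le> a"
  shows "completions (a, c) (Suc L) = completions (Suc a, c) L
    + (if c < a then completions (a, Suc c) L else 0) + int (num_corners a c) * completions (a, c) L"
proof -
  consider "1 \<le> c" "c < a" | "1 \<le> c" "c = a" | "c = 0" "1 \<le> a" | "c = 0" "a = 0"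
    using assms by linarith
  then show ?thesis
  proof cases
    case 1
    then show ?thesis
      using completions_two_Suc[of "int a - int c" "int L"]
      by (simp add: completions_def num_corners_def algebra_simps)
  next
    case 2
    then show ?thesis
      using completions_two_0_Suc[of "int L"] by (simp add: completions_def num_corners_def algebra_simps)
  next
    case 3
    then show ?thesis
      using completions_one_Suc[of "int a" "int L"]
      by (simp add: completions_def num_corners_def algebra_simps)
  qed (simp add: completions_def num_corners_def)
qed

lemma completion_columns_Suc:
  assumes "c \<le> a"
  shows "completion_columns (a, c) (Suc L) = completion_columns (Suc a, c) L
    + (if c < a then completion_columns (a, Suc c) L else 0)
    + int (num_corners a c) * completion_columns (a, c) L"
proof -
  consider "1 \<le> c" "c < a" | "1 \<le> c" "c = a" | "c = 0" "1 \<le> a" | "c = 0" "a = 0"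
    using assms by linarith
  then show ?thesis
  proof cases
    case 1
    then show ?thesis
      using completions_two_Suc[of "int a - int c" "int L"] column_gain_two_Suc[of "int a - int c" "int L"]
      by (simp add: completion_columns_def num_corners_def algebra_simps)
  next
    case 2
    then show ?thesis
      using completions_two_0_Suc[of "int L"] column_gain_two_0_Suc[of "int L"]
      by (simp add: completion_columns_def num_corners_def algebra_simps)
  next
    case 3
    then show ?thesis
      using completions_one_Suc[of "int a" "int L"] column_gain_one_Suc[of "int a" "int L"]
      by (simp add: completion_columns_def num_corners_def algebra_simps)
  qed (simp add: completion_columns_def num_corners_def)
qed

lemma sum_two_row_shapes_rectangles:
  "(\<Sum>(a, c)\<in>two_row_shapes n. if 1 \<le> c \<and> c = a then f a else 0) = (\<Sum>b | 1 \<le> b \<and> 2 * b \<le> n. f b)"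
proof -
  have "(\<Sum>(a, c)\<in>two_row_shapes n. if 1 \<le> c \<and> c = a then f a else 0)
      = (\<Sum>p\<in>{p\<in>two_row_shapes n. 1 \<le> snd p \<and> snd p = fst p}. f (fst p))"
    unfolding sum.inter_filter[OF finite_two_row_shapes] by (rule sum.cong) auto
  also have "\<dots> = (\<Sum>b | 1 \<le> b \<and> 2 * b \<le> n. f b)"
    by (rule sum.reindex_bij_witness[where j = fst and i = "\<lambda>b. (b, b)"]) (auto simp: two_row_shapes_def)
  finally show ?thesis .
qed

lemma sum_rectangle_fillings:
  "(\<Sum>b | 1 \<le> b \<and> 2 * b \<le> n. int (two_row_fillings b b n)) = completions (0, 0) n"
proof -
  have "completions (a, c) 0 = (if 1 \<le> c \<and> c = a then 1 else 0)" if "c \<le> a" for a c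
    using that by (auto simp: completions_def completions_two_def completions_one_def int_binom_def)
  then have "(\<Sum>(a, c)\<in>two_row_shapes n. int (two_row_fillings a c n) * completions (a, c) 0)
      = (\<Sum>(a, c)\<in>two_row_shapes n. if 1 \<le> c \<and> c = a then int (two_row_fillings a a n) else 0)"
    by (intro sum.cong) (auto simp: two_row_shapes_def)
  then show ?thesis
    using two_row_fillings_duality[where K = completions, OF completions_Suc, of n 0]
      sum_two_row_shapes_rectangles[of "\<lambda>b. int (two_row_fillings b b n)" n] by simp
qed

lemma sum_rectangle_fillings_columns:
  "(\<Sum>b | 1 \<le> b \<and> 2 * b \<le> n. int b * int (two_row_fillings b b n)) = completion_columns (0, 0) n"
proof -
  have "completion_columns (a, c) 0 = (if 1 \<le> c \<and> c = a then int a else 0)" if "c \<le> a" for a c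
    using that by (auto simp: completion_columns_def completions_two_def completions_one_def
        column_gain_two_def column_gain_one_def int_binom_def)
  then have "(\<Sum>(a, c)\<in>two_row_shapes n. int (two_row_fillings a c n) * completion_columns (a, c) 0)
      = (\<Sum>(a, c)\<in>two_row_shapes n. if 1 \<le> c \<and> c = a then int a * int (two_row_fillings a a n) else 0)"
    by (intro sum.cong) (auto simp: two_row_shapes_def)
  then show ?thesis
    using two_row_fillings_duality[where K = completion_columns, OF completion_columns_Suc, of n 0]
      sum_two_row_shapes_rectangles[of "\<lambda>b. int b * int (two_row_fillings b b n)" n] by simp
qed

lemma sum_two_row_union:
  fixes f :: "nat \<Rightarrow> 'a::comm_semiring_1"
  shows "(\<Sum>(b, T)\<in>two_row_union n. f b)
    = (\<Sum>b | 1 \<le> b \<and> 2 * b \<le> n. f b * of_nat (two_row_fillings b b n))"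
proof -
  have "two_row_union n = Sigma {b. 1 \<le> b \<and> 2 * b \<le> n} (\<lambda>b. set_fillings n (cells [b, b]))"
    unfolding two_row_union_def SYT_plus_eq_set_fillings by auto
  moreover have "finite {b. 1 \<le> b \<and> 2 * b \<le> n}" by (rule finite_subset[of _ "{..n}"]) auto
  ultimately show ?thesis
    by (simp add: sum.Sigma[symmetric] finite_set_fillings cells_two_rows two_row_fillings_def mult.commute)
qed

lemma card_two_row_union: "int (card (two_row_union n)) = completions (0, 0) n"
proof -
  have "int (card (two_row_union n)) = (\<Sum>(b, T)\<in>two_row_union n. 1)"
    by (simp add: case_prod_unfold)
  then show ?thesis
    using sum_two_row_union[of "\<lambda>_. 1 :: int" n] sum_rectangle_fillings[of n] by simp
qed

lemma sum_columns_two_row_union: "(\<Sum>(b, T)\<in>two_row_union n. int b) = completion_columns (0, 0) n"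
  using sum_two_row_union[of int n] sum_rectangle_fillings_columns[of n] by simp

theorem theorem20:
  fixes n :: nat
  assumes "n \<ge> 3"
  shows "(\<Sum>(b, T)\<in>two_row_union n. real b) / real (card (two_row_union n))
           = (real n ^ 2 + real n - 6) / (4 * real n - 6)"
proof -
  define m where "m = int n - 1"
  let ?Q = "completions_one 1 m" and ?U = "column_gain_one 1 m"
  have m: "2 \<le> m" "completions (0, 0) n = ?Q" "completion_columns (0, 0) n = ?Q + ?U"
    using assms by (auto simp: m_def completions_def completion_columns_def)
  have card: "real (card (two_row_union n)) = of_int ?Q"
    using card_two_row_union[of n] m(2) by (metis of_int_of_nat_eq)
  have "(\<Sum>(b, T)\<in>two_row_union n. real b) = of_int (\<Sum>(b, T)\<in>two_row_union n. int b)"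
    by (simp add: case_prod_unfold)
  then have sum: "(\<Sum>(b, T)\<in>two_row_union n. real b) = of_int ?Q + of_int ?U"
    using sum_columns_two_row_union[of n] m(3) by simp
  have "(of_int ?Q + of_int ?U) * (4 * (of_int m + 1) - 6)
      = ((of_int m + 1)^2 + (of_int m + 1) - 6) * real_of_int ?Q"
    using arg_cong[OF completions_one_1_column_gain[OF m(1)], of real_of_int]
    by (simp add: algebra_simps power2_eq_square)
  moreover have "real n = of_int m + 1" by (simp add: m_def)
  moreover have "0 < ?Q" using completions_one_1_pos m(1) by simp
  ultimately show ?thesis
    unfolding card sum using m(1) by (simp add: frac_eq_eq)
qed

end
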